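(* Let $G$ be a finite simple undirected graph, $s\neq t$ vertices and $r\ge2$. Then $$NBP_r(s,t)\le NBP_r^{L}(s,t)+NBP_{r-2}(s,t),$$ and consequently $NBP_r(s,t)\le NBP_1(s,t)+\sum_{m=2}^{r}NBP_m^{L}(s,t)$.
   Context: A nonbacktracking walk of length $r$ from $s$ to $t$ is a sequence $(x_1,\dots,x_{r+1})$ with $x_1=s$, $x_{r+1}=t$, each $\{x_i,x_{i+1}\}$ an edge, and $x_i\ne x_{i+2}$ for $1\le i\le r-1$. $NBP_r(s,t)$ is the number of such walks ($NBP_0(s,t)=0$ for $s\neq t$), and $NBP_r^L(s,t)$ is the number of such walks whose last edge $\{x_r,x_{r+1}\}$ is different from the first edge $\{x_1,x_2\}$. *)

theory Defs
  imports Main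
begin

definition simple_graph :: "'a set \<Rightarrow> ('a \<Rightarrow> 'a \<Rightarrow> bool) \<Rightarrow> bool" where
  "simple_graph V E \<longleftrightarrow> finite V \<and> (\<forall>x y. E x y \<longrightarrow> x \<in> V \<and> y \<in> V)
     \<and> (\<forall>x y. E x y \<longrightarrow> E y x) \<and> (\<forall>x. \<not> E x x)"

text \<open>Nonbacktracking walks of length r from s to t, as lists
  [x_1,...,x_(r+1)] (0-indexed in Isabelle).\<close>
definition nb_walks :: "('a \<Rightarrow> 'a \<Rightarrow> bool) \<Rightarrow> nat \<Rightarrow> 'a \<Rightarrow> 'a \<Rightarrow> 'a list set" where
  "nb_walks E r s t = {xs. length xs = r + 1 \<and> xs ! 0 = s \<and> xs ! r = t
     \<and> (\<forall>i<r. E (xs ! i) (xs ! (i+1)))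
     \<and> (\<forall>i. i + 2 \<le> r \<longrightarrow> xs ! i \<noteq> xs ! (i+2))}"

definition NBP :: "('a \<Rightarrow> 'a \<Rightarrow> bool) \<Rightarrow> nat \<Rightarrow> 'a \<Rightarrow> 'a \<Rightarrow> nat" where
  "NBP E r s t = card (nb_walks E r s t)"

definition NBPL :: "('a \<Rightarrow> 'a \<Rightarrow> bool) \<Rightarrow> nat \<Rightarrow> 'a \<Rightarrow> 'a \<Rightarrow> nat" where
  "NBPL E r s t = card {xs \<in> nb_walks E r s t.
      {xs ! (r-1), xs ! r} \<noteq> {xs ! 0, xs ! 1}}"

end

theory Submission
  imports Defs
begin

text \<open>Split the nonbacktracking walks from s to t of length r by whether the last
  edge equals the first. Since s \<noteq> t, equality forces the walk to start s, t, ... and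
  end ..., s, t; deleting both endpoints and reversing what remains yields a
  nonbacktracking walk from s to t of length r - 2, and this map is injective. Iterating
  the resulting inequality down to length 0 or 1 gives the summed bound.\<close>

lemma set_nb_walk_subset:
  assumes "xs \<in> nb_walks E r s t" and "\<And>x y. E x y \<Longrightarrow> y \<in> V"
  shows "set xs \<subseteq> insert s V"
proof
  fix x assume "x \<in> set xs"
  then obtain i where i: "i \<le> r" "xs ! i = x"
    using assms(1) by (auto simp: nb_walks_def in_set_conv_nth less_Suc_eq_le)
  show "x \<in> insert s V"
  proof (cases i)
    case 0
    then show ?thesis using assms(1) i by (simp add: nb_walks_def)
  next
    case (Suc j)
    then have "E (xs ! j) (xs ! i)" using assms(1) i by (auto simp: nb_walks_def)
    then show ?thesis using assms(2) i by blast
  qed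
qed

lemma finite_nb_walks:
  assumes "finite V" and "\<And>x y. E x y \<Longrightarrow> y \<in> V"
  shows "finite (nb_walks E r s t)"
proof (rule finite_subset)
  show "nb_walks E r s t \<subseteq> {xs. set xs \<subseteq> insert s V \<and> length xs = r + 1}"
  proof
    fix xs assume xs: "xs \<in> nb_walks E r s t"
    with set_nb_walk_subset[OF xs assms(2)]
    show "xs \<in> {xs. set xs \<subseteq> insert s V \<and> length xs = r + 1}"
      by (simp add: nb_walks_def)
  qed
  show "finite {xs. set xs \<subseteq> insert s V \<and> length xs = r + 1}"
    using assms(1) by (intro finite_lists_length_eq) simp
qed

lemma rev_nb_walk:
  assumes "xs \<in> nb_walks E r s t" and "\<And>x y. E x y \<Longrightarrow> E y x"
  shows "rev xs \<in> nb_walks E r t s"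
proof -
  have len: "length xs = r + 1" and ends: "xs ! 0 = s" "xs ! r = t"
    and edge: "\<And>i. i < r \<Longrightarrow> E (xs ! i) (xs ! (i+1))"
    and nb: "\<And>i. i + 2 \<le> r \<Longrightarrow> xs ! i \<noteq> xs ! (i+2)"
    using assms(1) by (auto simp: nb_walks_def)
  have rev_at: "rev xs ! i = xs ! (r - i)" if "i \<le> r" for i
    using that len by (simp add: rev_nth Suc_diff_le)
  have "E (rev xs ! i) (rev xs ! (i+1))" if "i < r" for i
  proof -
    have "E (xs ! (r - (i+1))) (xs ! (r - (i+1) + 1))" using edge that by simp
    then show ?thesis using that rev_at assms(2) by (simp add: Suc_diff_Suc)
  qed
  moreover have "rev xs ! i \<noteq> rev xs ! (i+2)" if "i + 2 \<le> r" for i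
  proof -
    have "xs ! (r - (i+2)) \<noteq> xs ! (r - (i+2) + 2)" using nb that by simp
    moreover have "r - (i+2) + 2 = r - i" using that by simp
    ultimately show ?thesis using that rev_at by simp
  qed
  ultimately show ?thesis
    using len ends rev_at[of 0] rev_at[of r] by (simp add: nb_walks_def)
qed

lemma interior_nb_walk:
  assumes "xs \<in> nb_walks E r s t" and "r \<ge> 2"
  shows "butlast (tl xs) \<in> nb_walks E (r - 2) (xs ! 1) (xs ! (r - 1))"
proof -
  have len: "length xs = r + 1" using assms(1) by (simp add: nb_walks_def)
  have at: "butlast (tl xs) ! i = xs ! Suc i" if "i < r - 1" for i
    using that len by (simp add: nth_butlast nth_tl)
  show ?thesis
    using assms len at[of 0] at[of "r - 2"] at
    by (auto simp: nb_walks_def Suc_diff_Suc numeral_2_eq_2)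
qed

lemma nb_walk_eq_by_interior:
  assumes "xs \<in> nb_walks E r s t" and "ys \<in> nb_walks E r s t" and "r \<ge> 1"
    and "butlast (tl xs) = butlast (tl ys)"
  shows "xs = ys"
proof -
  have decomp: "zs = s # butlast (tl zs) @ [t]" if "zs \<in> nb_walks E r s t" for zs
  proof -
    have len: "length zs = r + 1" using that by (simp add: nb_walks_def)
    then have "zs \<noteq> []" by auto
    then have "hd zs = s" "last zs = t"
      using that len by (auto simp: nb_walks_def hd_conv_nth last_conv_nth)
    then show ?thesis
      using len assms(3) by (cases zs) (auto simp: append_butlast_last_id)
  qed
  show ?thesis using decomp[OF assms(1)] decomp[OF assms(2)] assms(4) by metis
qed

lemma NBP_le_NBPL_plus_NBP:
  assumes G: "simple_graph V E" and "s \<noteq> t" and "r \<ge> 2"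
  shows "NBP E r s t \<le> NBPL E r s t + NBP E (r - 2) s t"
proof -
  have finite: "finite (nb_walks E k s t)" for k
    using G by (intro finite_nb_walks[of V]) (auto simp: simple_graph_def)
  have sym: "\<And>x y. E x y \<Longrightarrow> E y x" using G by (simp add: simple_graph_def)
  define same_edge where "same_edge xs \<longleftrightarrow> {xs ! (r-1), xs ! r} = {xs ! 0, xs ! 1}"
    for xs :: "'a list"
  define C where "C = {xs \<in> nb_walks E r s t. same_edge xs}"
  define f where "f xs = rev (butlast (tl xs))" for xs :: "'a list"
  have C_ends: "xs ! 1 = t \<and> xs ! (r - 1) = s" if "xs \<in> C" for xs
    using that \<open>s \<noteq> t\<close> by (auto simp: C_def same_edge_def nb_walks_def doubleton_eq_iff)
  have "inj_on f C"
  proof (rule inj_onI)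
    fix xs ys assume "xs \<in> C" "ys \<in> C" "f xs = f ys"
    then show "xs = ys"
      using nb_walk_eq_by_interior[of xs E r s t ys] \<open>r \<ge> 2\<close> by (simp add: f_def C_def)
  qed
  moreover have "f ` C \<subseteq> nb_walks E (r - 2) s t"
  proof
    fix zs assume "zs \<in> f ` C"
    then obtain xs where "xs \<in> C" "zs = f xs" by blast
    then show "zs \<in> nb_walks E (r - 2) s t"
      using interior_nb_walk[of xs E r s t] rev_nb_walk[OF _ sym] C_ends \<open>r \<ge> 2\<close>
      by (auto simp: C_def f_def)
  qed
  ultimately have "card C \<le> NBP E (r - 2) s t"
    unfolding NBP_def using card_inj_on_le finite by blast
  moreover have "NBP E r s t = NBPL E r s t + card C"
  proof -
    have "nb_walks E r s t = {xs \<in> nb_walks E r s t. \<not> same_edge xs} \<union> C"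
      by (auto simp: C_def)
    then show ?thesis
      unfolding NBP_def NBPL_def same_edge_def C_def
      using finite by (subst card_Un_disjoint[symmetric]) auto
  qed
  ultimately show ?thesis by simp
qed

lemma NBP_0: "s \<noteq> t \<Longrightarrow> NBP E 0 s t = 0"
proof -
  assume "s \<noteq> t"
  then have "nb_walks E 0 s t = {}" by (auto simp: nb_walks_def)
  then show ?thesis by (simp add: NBP_def)
qed

lemma NBP_le_NBP_1_plus_sum_NBPL:
  assumes G: "simple_graph V E" and "s \<noteq> t" and "r \<ge> 1"
  shows "NBP E r s t \<le> NBP E 1 s t + (\<Sum>m=2..r. NBPL E m s t)"
  using \<open>r \<ge> 1\<close>
proof (induction r rule: less_induct)
  case (less r)
  consider "r = 1" | "r = 2" | "r \<ge> 3" using less.prems by linarith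
  then show ?case
  proof cases
    case 1
    then show ?thesis by simp
  next
    case 2
    then show ?thesis using NBP_le_NBPL_plus_NBP[OF G \<open>s \<noteq> t\<close>, of 2] NBP_0[OF \<open>s \<noteq> t\<close>] by simp
  next
    case 3
    have "NBP E r s t \<le> NBPL E r s t + NBP E (r - 2) s t"
      using NBP_le_NBPL_plus_NBP[OF G \<open>s \<noteq> t\<close>] 3 by simp
    also have "\<dots> \<le> NBPL E r s t + (NBP E 1 s t + (\<Sum>m=2..r-2. NBPL E m s t))"
      using less.IH[of "r - 2"] 3 by simp
    also have "(\<Sum>m=2..r-2. NBPL E m s t) \<le> (\<Sum>m=2..r-1. NBPL E m s t)"
      by (intro sum_mono2) auto
    also have "NBPL E r s t + (NBP E 1 s t + (\<Sum>m=2..r-1. NBPL E m s t))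
        = NBP E 1 s t + (\<Sum>m=2..r. NBPL E m s t)"
      using 3 by (cases r) (simp_all add: sum.cl_ivl_Suc)
    finally show ?thesis by simp
  qed
qed

theorem mainTheorem6:
  fixes V :: "'a set" and E :: "'a \<Rightarrow> 'a \<Rightarrow> bool" and s t :: 'a and r :: nat
  assumes "simple_graph V E" and "s \<in> V" and "t \<in> V" and "s \<noteq> t" and "r \<ge> 2"
  shows "NBP E r s t \<le> NBPL E r s t + NBP E (r-2) s t
    \<and> NBP E r s t \<le> NBP E 1 s t + (\<Sum>m=2..r. NBPL E m s t)"
  using NBP_le_NBPL_plus_NBP[OF assms(1,4,5)] NBP_le_NBP_1_plus_sum_NBPL[OF assms(1,4)] assms(5)
  by simp

end
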